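(* Let $S$ be a Hausdorff semitopological semigroup and let $(x_n)$, $(y_n)$ be unbounded sequences in $S$. Let $\mu,\nu\in S^*$ with $\nu\in\mathrm{cl}_{S^{Lmc}}\varepsilon(\{x_n:n\in\mathbb{N}\})$ and $\mu\in\mathrm{cl}_{S^{Lmc}}\varepsilon(\{y_n:n\in\mathbb{N}\})$. Then $$\mu\nu\in\mathrm{cl}_{S^{Lmc}}\varepsilon(\{y_kx_n:k<n,\ k,n\in\mathbb{N}\}).$$
   Context: A Hausdorff semitopological semigroup is a semigroup $S$ with a Hausdorff topology such that all maps $\lambda_s(x)=sx$, $r_s(x)=xs$ are continuous. $\mathcal{CB}(S)$: bounded continuous complex functions with sup norm; $\beta S$ its spectrum with Gelfand topology; $L_sf(x)=f(sx)$, $(T_\mu f)(s)=\mu(L_sf)$; $Lmc(S)=\{f\in\mathcal{CB}(S):T_\mu f\in\mathcal{CB}(S)\ \forall \mu\in\beta S\}$. $S^{Lmc}$ is the spectrum of $Lmc(S)$ with the Gelfand topology and multiplication $\mu\nu=\mu\circ T_\nu$, where $(T_\nu f)(s)=\nu(L_sf)$ for $f\in Lmc(S)$; $\varepsilon:S\to S^{Lmc}$ is evaluation, $\varepsilon(s)(f)=f(s)$. $S^*=S^{Lmc}\setminus\varepsilon(S)$. A set $A\subseteq S$ is unbounded if $\mathrm{cl}_{S^{Lmc}}\varepsilon(A)\cap S^*\neq\emptyset$; a sequence $(x_n)$ is unbounded if $\{x_n:n\in\mathbb{N}\}$ is unbounded. *)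

theory Defs
  imports "HOL-Analysis.Analysis"
begin

text \<open>The type
  ('a \<Rightarrow> complex) \<Rightarrow> complex carries the product topology (pointwise
  convergence), so for functionals vanishing outside a function algebra A
  it restricts to the weak-star (Gelfand) topology on the spectrum of A.\<close>

definition semitopological :: "'a::{topological_space, semigroup_mult} itself \<Rightarrow> bool" where
  "semitopological _ \<longleftrightarrow>
     (\<forall>s::'a. continuous_on UNIV (\<lambda>x. s * x) \<and> continuous_on UNIV (\<lambda>x. x * s))"

definition CB :: "('a::topological_space \<Rightarrow> complex) set" where
  "CB = {f. continuous_on UNIV f \<and> bounded (range f)}"

definition spectrum_of :: "('a \<Rightarrow> complex) set \<Rightarrow> (('a \<Rightarrow> complex) \<Rightarrow> complex) set" where
  "spectrum_of A = {\<mu>.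
      (\<forall>f\<in>A. \<forall>g\<in>A. \<mu> (\<lambda>x. f x + g x) = \<mu> f + \<mu> g) \<and>
      (\<forall>c. \<forall>f\<in>A. \<mu> (\<lambda>x. c * f x) = c * \<mu> f) \<and>
      (\<forall>f\<in>A. \<forall>g\<in>A. \<mu> (\<lambda>x. f x * g x) = \<mu> f * \<mu> g) \<and>
      (\<exists>f\<in>A. \<mu> f \<noteq> 0) \<and>
      (\<forall>f. f \<notin> A \<longrightarrow> \<mu> f = 0)}"

definition betaS :: "(('a::topological_space \<Rightarrow> complex) \<Rightarrow> complex) set" where
  "betaS = spectrum_of CB"

definition Ltrans :: "'a::semigroup_mult \<Rightarrow> ('a \<Rightarrow> complex) \<Rightarrow> ('a \<Rightarrow> complex)" where
  "Ltrans s f = (\<lambda>x. f (s * x))"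

definition Top :: "(('a::semigroup_mult \<Rightarrow> complex) \<Rightarrow> complex) \<Rightarrow> ('a \<Rightarrow> complex) \<Rightarrow> ('a \<Rightarrow> complex)" where
  "Top \<mu> f = (\<lambda>s. \<mu> (Ltrans s f))"

definition Lmc :: "('a::{topological_space, semigroup_mult} \<Rightarrow> complex) set" where
  "Lmc = {f \<in> CB. \<forall>\<mu>\<in>betaS. Top \<mu> f \<in> CB}"

definition SLmc :: "(('a::{topological_space, semigroup_mult} \<Rightarrow> complex) \<Rightarrow> complex) set" where
  "SLmc = spectrum_of Lmc"

definition Lmc_mult ::
  "(('a::{topological_space, semigroup_mult} \<Rightarrow> complex) \<Rightarrow> complex) \<Rightarrow>
   (('a \<Rightarrow> complex) \<Rightarrow> complex) \<Rightarrow> (('a \<Rightarrow> complex) \<Rightarrow> complex)" where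
  "Lmc_mult \<mu> \<nu> = (\<lambda>f. if f \<in> Lmc then \<mu> (Top \<nu> f) else 0)"

definition evl :: "'a::{topological_space, semigroup_mult} \<Rightarrow> (('a \<Rightarrow> complex) \<Rightarrow> complex)" where
  "evl s = (\<lambda>f. if f \<in> Lmc then f s else 0)"

definition Sstar :: "(('a::{topological_space, semigroup_mult} \<Rightarrow> complex) \<Rightarrow> complex) set" where
  "Sstar = SLmc - range evl"

definition clLmc :: "'a::{topological_space, semigroup_mult} set \<Rightarrow> (('a \<Rightarrow> complex) \<Rightarrow> complex) set" where
  "clLmc A = closure (evl ` A) \<inter> SLmc"

definition unbounded_set :: "'a::{topological_space, semigroup_mult} set \<Rightarrow> bool" where
  "unbounded_set A \<longleftrightarrow> clLmc A \<inter> Sstar \<noteq> {}"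

definition unbounded_seq :: "(nat \<Rightarrow> 'a::{topological_space, semigroup_mult}) \<Rightarrow> bool" where
  "unbounded_seq x \<longleftrightarrow> unbounded_set (range x)"

end

theory Submission
  imports Defs
begin

text \<open>View S^Lmc as a right topological semigroup: \<mu> \<mapsto> \<mu>\<nu> is continuous for every \<nu>,
  and \<epsilon>(s)\<nu> = \<nu> \<circ> L_s depends continuously on \<nu>, with \<epsilon>(s)\<epsilon>(t) = \<epsilon>(st).
  Since \<nu> \<notin> \<epsilon>(S) and finite sets are closed, \<nu> lies in the closure of every tail
  \<epsilon>{x_n : n > k}, so \<epsilon>(y_k)\<nu> lies in the closure of \<epsilon>{y_k x_n : n > k}; and \<mu>\<nu> is a
  limit of the \<epsilon>(y_k)\<nu>.

  The identity \<epsilon>(s)\<nu> = \<nu> \<circ> L_s requires T_\<nu> to map Lmc(S) into itself. For this, every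
  functional in the closure of \<epsilon>(S) is the restriction of a character of CB(S) (a
  compactness argument), and every character of CB(S) is a limit of point evaluations
  (otherwise it would annihilate a function bounded away from 0).\<close>


section \<open>Pointwise topology on functionals\<close>

lemma compact_imp_closed_fun:
  fixes K :: "('a \<Rightarrow> 'b::metric_space) set"
  assumes "compact K"
  shows "closed K"
proof -
  have "Hausdorff_space (product_topology (\<lambda>i. euclidean :: 'b topology) (UNIV :: 'a set))"
    by (simp add: Hausdorff_space_product_topology)
  then have "Hausdorff_space (euclidean :: ('a \<Rightarrow> 'b) topology)"
    by (simp only: euclidean_product_topology)
  moreover have "compactin euclidean K"
    using assms by simp
  ultimately show ?thesis
    unfolding closed_closedin by (rule compactin_imp_closedin)
qed

lemma closure_range_tail:
  fixes a :: "nat \<Rightarrow> 'a \<Rightarrow> 'b::metric_space"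
  assumes "p \<in> closure (range a)" and "p \<notin> range a"
  shows "p \<in> closure (a ` {k<..})"
proof -
  have "range a = a ` ({..k} \<union> {k<..})"
    by auto
  then have "range a = a ` {..k} \<union> a ` {k<..}"
    by (simp only: image_Un)
  moreover have "closure (a ` {..k}) = a ` {..k}"
    by (intro closure_closed compact_imp_closed_fun finite_imp_compact) simp
  ultimately show ?thesis
    using assms by auto
qed

lemma in_closure_funI:
  fixes \<phi> :: "'i \<Rightarrow> 'b::metric_space"
  assumes "\<And>F e. finite F \<Longrightarrow> e > 0 \<Longrightarrow> \<exists>s\<in>S. \<forall>i\<in>F. dist (s i) (\<phi> i) < e"
  shows "\<phi> \<in> closure S"
  unfolding closure_iff_nhds_not_empty
proof (intro allI impI)
  fix B U assume UB: "U \<subseteq> B" "open U" "\<phi> \<in> U"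
  then obtain X where X: "\<phi> \<in> (\<Pi>\<^sub>E i\<in>UNIV. X i)" "\<forall>i. openin euclidean (X i)"
      "finite {i. X i \<noteq> topspace euclidean}" "(\<Pi>\<^sub>E i\<in>UNIV. X i) \<subseteq> U"
    using product_topology_open_contains_basis[of "\<lambda>i. euclidean" UNIV U \<phi>]
    unfolding open_fun_def by auto
  define I where "I = {i. X i \<noteq> UNIV}"
  have "finite I"
    using X(3) by (simp add: I_def)
  have "\<forall>i. \<exists>e>0. ball (\<phi> i) e \<subseteq> X i"
    using X(1,2) by (auto simp: PiE_iff openin_open open_contains_ball)
  then obtain r where r: "\<And>i. r i > 0" "\<And>i. ball (\<phi> i) (r i) \<subseteq> X i"
    by metis
  define e where "e = Min (insert 1 (r ` I))"
  have "e > 0"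
    unfolding e_def using \<open>finite I\<close> r(1) by auto
  then obtain s where s: "s \<in> S" "\<forall>i\<in>I. dist (s i) (\<phi> i) < e"
    using assms \<open>finite I\<close> by blast
  have "s i \<in> X i" for i
  proof (cases "i \<in> I")
    case True
    then have "e \<le> r i"
      unfolding e_def using \<open>finite I\<close> by auto
    with True s(2) have "s i \<in> ball (\<phi> i) (r i)"
      by (auto simp: dist_commute)
    then show ?thesis
      using r(2) by blast
  qed (auto simp: I_def)
  then have "s \<in> (\<Pi>\<^sub>E i\<in>UNIV. X i)"
    by (simp add: PiE_iff)
  then show "S \<inter> B \<noteq> {}"
    using s(1) X(4) UB(1) by blast
qed


section \<open>Function algebras and their characters\<close>

definition function_algebra :: "('a \<Rightarrow> complex) set \<Rightarrow> bool" where
  "function_algebra A \<longleftrightarrow> (\<forall>c. (\<lambda>x. c) \<in> A) \<and>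
     (\<forall>f\<in>A. \<forall>g\<in>A. (\<lambda>x. f x + g x) \<in> A) \<and> (\<forall>f\<in>A. \<forall>g\<in>A. (\<lambda>x. f x * g x) \<in> A)"

text \<open>Unlike the nonvanishing condition of the spectrum, the normalisation on constants
  is a closed condition.\<close>

definition characters :: "('a \<Rightarrow> complex) set \<Rightarrow> (('a \<Rightarrow> complex) \<Rightarrow> complex) set" where
  "characters A = {\<phi>.
      (\<forall>c. \<phi> (\<lambda>x. c) = c) \<and>
      (\<forall>f\<in>A. \<forall>g\<in>A. \<phi> (\<lambda>x. f x + g x) = \<phi> f + \<phi> g) \<and>
      (\<forall>f\<in>A. \<forall>g\<in>A. \<phi> (\<lambda>x. f x * g x) = \<phi> f * \<phi> g) \<and>
      (\<forall>f. f \<notin> A \<longrightarrow> \<phi> f = 0)}"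

lemma function_algebra_const: "function_algebra A \<Longrightarrow> (\<lambda>x. c) \<in> A"
  and function_algebra_add: "function_algebra A \<Longrightarrow> f \<in> A \<Longrightarrow> g \<in> A \<Longrightarrow> (\<lambda>x. f x + g x) \<in> A"
  and function_algebra_mult: "function_algebra A \<Longrightarrow> f \<in> A \<Longrightarrow> g \<in> A \<Longrightarrow> (\<lambda>x. f x * g x) \<in> A"
  by (simp_all add: function_algebra_def)

lemma character_const: "\<phi> \<in> characters A \<Longrightarrow> \<phi> (\<lambda>x. c) = c"
  and character_add: "\<phi> \<in> characters A \<Longrightarrow> f \<in> A \<Longrightarrow> g \<in> A \<Longrightarrow> \<phi> (\<lambda>x. f x + g x) = \<phi> f + \<phi> g"
  and character_mult: "\<phi> \<in> characters A \<Longrightarrow> f \<in> A \<Longrightarrow> g \<in> A \<Longrightarrow> \<phi> (\<lambda>x. f x * g x) = \<phi> f * \<phi> g"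
  and character_outside: "\<phi> \<in> characters A \<Longrightarrow> f \<notin> A \<Longrightarrow> \<phi> f = 0"
  by (simp_all add: characters_def)

lemma spectrum_of_eq_characters:
  assumes "function_algebra A"
  shows "spectrum_of A = characters A"
proof (intro equalityI subsetI)
  fix \<phi> assume \<phi>: "\<phi> \<in> spectrum_of A"
  then obtain f where f: "f \<in> A" "\<phi> f \<noteq> 0"
    by (auto simp: spectrum_of_def)
  have mult: "\<forall>f\<in>A. \<forall>g\<in>A. \<phi> (\<lambda>x. f x * g x) = \<phi> f * \<phi> g"
    and scale: "\<forall>c. \<forall>f\<in>A. \<phi> (\<lambda>x. c * f x) = c * \<phi> f"
    using \<phi> by (simp_all add: spectrum_of_def)
  have "\<phi> (\<lambda>x. f x * 1) = \<phi> f * \<phi> (\<lambda>x. 1)"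
    by (rule mult[rule_format]) (use f(1) function_algebra_const[OF assms] in auto)
  with f have one: "\<phi> (\<lambda>x. 1) = 1"
    by simp
  have "\<phi> (\<lambda>x. c * 1) = c * \<phi> (\<lambda>x. 1)" for c
    by (rule scale[rule_format]) (rule function_algebra_const[OF assms])
  with one have "\<phi> (\<lambda>x. c) = c" for c
    by simp
  with \<phi> show "\<phi> \<in> characters A"
    by (simp add: spectrum_of_def characters_def)
next
  fix \<phi> assume \<phi>: "\<phi> \<in> characters A"
  have "\<phi> (\<lambda>x. c * f x) = c * \<phi> f" if "f \<in> A" for c f
    using character_mult[OF \<phi> function_algebra_const[OF assms] that] character_const[OF \<phi>]
    by simp
  moreover have "\<exists>f\<in>A. \<phi> f \<noteq> 0"
    by (intro bexI[of _ "\<lambda>x. 1"]) (simp_all add: character_const[OF \<phi>] function_algebra_const[OF assms])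
  ultimately show "\<phi> \<in> spectrum_of A"
    using \<phi> by (simp add: spectrum_of_def characters_def)
qed

lemma closed_characters: "closed (characters A)"
proof -
  have coordinate: "continuous_on UNIV (\<lambda>\<phi>::('a \<Rightarrow> complex) \<Rightarrow> complex. \<phi> f)" for f
    by simp
  have "characters A = (\<Inter>c. {\<phi>. \<phi> (\<lambda>x. c) = c}) \<inter>
      (\<Inter>f\<in>A. \<Inter>g\<in>A. {\<phi>. \<phi> (\<lambda>x. f x + g x) = \<phi> f + \<phi> g}) \<inter>
      (\<Inter>f\<in>A. \<Inter>g\<in>A. {\<phi>. \<phi> (\<lambda>x. f x * g x) = \<phi> f * \<phi> g}) \<inter>
      (\<Inter>f\<in>-A. {\<phi>. \<phi> f = 0})"
    by (auto simp: characters_def)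
  also have "closed \<dots>"
    by (intro closed_Int closed_INT ballI closed_Collect_eq continuous_intros coordinate)
  finally show ?thesis .
qed

lemma evaluation_in_characters:
  "function_algebra A \<Longrightarrow> (\<lambda>f. if f \<in> A then f s else 0) \<in> characters A"
  by (simp add: characters_def function_algebra_def)

lemma closure_evaluations_subset_characters:
  "function_algebra A \<Longrightarrow> closure ((\<lambda>s f. if f \<in> A then f s else 0) ` T) \<subseteq> characters A"
  by (rule closure_minimal) (auto intro: evaluation_in_characters closed_characters)

lemma character_sum:
  assumes \<phi>: "\<phi> \<in> characters A" and A: "function_algebra A"
    and "finite I" and "\<And>i. i \<in> I \<Longrightarrow> t i \<in> A"
  shows "(\<lambda>x. \<Sum>i\<in>I. t i x) \<in> A \<and> \<phi> (\<lambda>x. \<Sum>i\<in>I. t i x) = (\<Sum>i\<in>I. \<phi> (t i))"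
  using assms(3,4)
proof (induction I rule: finite_induct)
  case empty
  show ?case
    using function_algebra_const[OF A] character_const[OF \<phi>] by simp
next
  case (insert i I)
  then show ?case
    using function_algebra_add[OF A] character_add[OF \<phi>] by simp
qed


section \<open>The algebras CB and Lmc\<close>

lemma CB_iff: "f \<in> CB \<longleftrightarrow> continuous_on UNIV f \<and> (\<exists>B. \<forall>x. cmod (f x) \<le> B)"
  unfolding CB_def bounded_iff by auto

lemma function_algebra_CB: "function_algebra (CB :: ('a::topological_space \<Rightarrow> complex) set)"
  unfolding function_algebra_def
proof (intro conjI ballI allI)
  show "(\<lambda>x. c) \<in> (CB :: ('a \<Rightarrow> complex) set)" for c
    unfolding CB_iff by auto
next
  fix f g :: "'a \<Rightarrow> complex" assume "f \<in> CB" "g \<in> CB"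
  then obtain B C where B: "\<And>x. cmod (f x) \<le> B" and C: "\<And>x. cmod (g x) \<le> C"
    and cont: "continuous_on UNIV f" "continuous_on UNIV g"
    unfolding CB_iff by blast
  have "cmod (f x + g x) \<le> B + C" for x
    using norm_triangle_le[OF add_mono[OF B C]] .
  moreover have "continuous_on UNIV (\<lambda>x. f x + g x)"
    using cont by (intro continuous_intros)
  ultimately show "(\<lambda>x. f x + g x) \<in> CB"
    unfolding CB_iff by blast
  have "cmod (f x * g x) \<le> B * C" for x
    unfolding norm_mult using B C by (intro mult_mono) (auto intro: order_trans[OF norm_ge_zero])
  moreover have "continuous_on UNIV (\<lambda>x. f x * g x)"
    using cont by (intro continuous_intros)
  ultimately show "(\<lambda>x. f x * g x) \<in> CB"
    unfolding CB_iff by blast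
qed

lemma CB_const: "(\<lambda>x. c) \<in> CB"
  and CB_add: "f \<in> CB \<Longrightarrow> g \<in> CB \<Longrightarrow> (\<lambda>x. f x + g x) \<in> CB"
  and CB_mult: "f \<in> CB \<Longrightarrow> g \<in> CB \<Longrightarrow> (\<lambda>x. f x * g x) \<in> CB"
  by (fact function_algebra_const[OF function_algebra_CB]
      function_algebra_add[OF function_algebra_CB] function_algebra_mult[OF function_algebra_CB])+

lemma Ltrans_CB:
  assumes "semitopological TYPE('a::{topological_space, semigroup_mult})" and "f \<in> CB"
  shows "Ltrans (s::'a) f \<in> CB"
proof -
  have "continuous_on UNIV (\<lambda>x::'a. s * x)"
    using assms(1) by (simp add: semitopological_def)
  with assms(2) show ?thesis
    unfolding CB_iff Ltrans_def by (auto intro: continuous_on_compose2)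
qed

lemma Top_Ltrans: "Top \<mu> (Ltrans s f) = Ltrans s (Top \<mu> f)"
  by (simp add: Top_def Ltrans_def mult.assoc)

lemma Lmc_iff: "f \<in> Lmc \<longleftrightarrow> f \<in> CB \<and> (\<forall>\<mu>\<in>characters CB. Top \<mu> f \<in> CB)"
  unfolding Lmc_def betaS_def spectrum_of_eq_characters[OF function_algebra_CB] by simp

lemma Lmc_subset_CB: "Lmc \<subseteq> CB"
  by (auto simp: Lmc_iff)

lemma Ltrans_Lmc:
  "semitopological TYPE('a::{topological_space, semigroup_mult}) \<Longrightarrow>
    f \<in> Lmc \<Longrightarrow> Ltrans (s::'a) f \<in> Lmc"
  by (auto simp: Lmc_iff Top_Ltrans intro: Ltrans_CB)

lemma Top_const: "\<mu> \<in> characters A \<Longrightarrow> Top \<mu> (\<lambda>x. c) = (\<lambda>s. c)"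
  by (simp add: Top_def Ltrans_def character_const)

lemma Top_add:
  assumes "\<mu> \<in> characters A" and "\<And>s. Ltrans s f \<in> A" and "\<And>s. Ltrans s g \<in> A"
  shows "Top \<mu> (\<lambda>x. f x + g x) = (\<lambda>s. Top \<mu> f s + Top \<mu> g s)"
  using character_add[OF assms] by (simp add: Top_def Ltrans_def)

lemma Top_mult:
  assumes "\<mu> \<in> characters A" and "\<And>s. Ltrans s f \<in> A" and "\<And>s. Ltrans s g \<in> A"
  shows "Top \<mu> (\<lambda>x. f x * g x) = (\<lambda>s. Top \<mu> f s * Top \<mu> g s)"
  using character_mult[OF assms] by (simp add: Top_def Ltrans_def)

lemma function_algebra_Lmc:
  assumes "semitopological TYPE('a::{topological_space, semigroup_mult})"
  shows "function_algebra (Lmc :: ('a \<Rightarrow> complex) set)"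
  unfolding function_algebra_def
proof (intro conjI ballI allI)
  show "(\<lambda>x. c) \<in> (Lmc :: ('a \<Rightarrow> complex) set)" for c
    by (simp add: Lmc_iff CB_const Top_const)
next
  fix f g :: "'a \<Rightarrow> complex" assume "f \<in> Lmc" "g \<in> Lmc"
  then have "f \<in> CB" "g \<in> CB" "\<And>s. Ltrans s f \<in> CB" "\<And>s. Ltrans s g \<in> CB"
    and "\<And>\<mu>. \<mu> \<in> characters CB \<Longrightarrow> Top \<mu> f \<in> CB \<and> Top \<mu> g \<in> CB"
    using Ltrans_CB[OF assms] by (auto simp: Lmc_iff)
  then show "(\<lambda>x. f x + g x) \<in> Lmc" and "(\<lambda>x. f x * g x) \<in> Lmc"
    by (auto simp: Lmc_iff Top_add Top_mult intro: CB_add CB_mult)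
qed

lemma SLmc_eq_characters:
  "semitopological TYPE('a::{topological_space, semigroup_mult}) \<Longrightarrow>
    (SLmc :: (('a \<Rightarrow> complex) \<Rightarrow> complex) set) = characters Lmc"
  unfolding SLmc_def by (rule spectrum_of_eq_characters[OF function_algebra_Lmc])


section \<open>Characters of CB\<close>

definition evalCB :: "'a::topological_space \<Rightarrow> ('a \<Rightarrow> complex) \<Rightarrow> complex" where
  "evalCB s = (\<lambda>f. if f \<in> CB then f s else 0)"

lemma closure_evalCB_subset_characters: "closure (evalCB ` T) \<subseteq> characters CB"
  unfolding evalCB_def[abs_def] by (rule closure_evaluations_subset_characters[OF function_algebra_CB])

lemma compact_closure_evalCB: "compact (closure (evalCB ` T))"
proof -
  define K where "K f = closure (range (\<lambda>s. evalCB s f))" for f :: "'a \<Rightarrow> complex"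
  have "compact (K f)" for f
    by (cases "f \<in> CB") (auto simp: K_def evalCB_def CB_def)
  then have "compact (Pi\<^sub>E UNIV K)"
    using compactin_PiE[of "\<lambda>_. euclidean" UNIV K] by (simp add: euclidean_product_topology)
  moreover have "evalCB s f \<in> K f" for s f
    unfolding K_def by (rule closure_subset[THEN subsetD]) (rule rangeI)
  then have "evalCB ` T \<subseteq> Pi\<^sub>E UNIV K"
    by (auto simp: PiE_iff)
  ultimately have "closure (evalCB ` T) \<subseteq> Pi\<^sub>E UNIV K"
    by (intro closure_minimal compact_imp_closed_fun)
  with \<open>compact (Pi\<^sub>E UNIV K)\<close> show ?thesis
    using compact_Int_closed[of "Pi\<^sub>E UNIV K" "closure (evalCB ` T)"] by (simp add: Int_absorb1)
qed

lemma character_CB_nonzero: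
  assumes \<psi>: "\<psi> \<in> characters CB" and h: "h \<in> CB"
    and "c > 0" and bounded_below: "\<And>x. c \<le> cmod (h x)"
  shows "\<psi> h \<noteq> 0"
proof
  assume "\<psi> h = 0"
  have nonzero: "h x \<noteq> 0" for x
    using bounded_below[of x] \<open>c > 0\<close> by auto
  have "continuous_on UNIV (\<lambda>x. inverse (h x))"
    using h nonzero unfolding CB_iff by (auto intro: continuous_on_inverse)
  moreover have "cmod (inverse (h x)) \<le> inverse c" for x
    using bounded_below[of x] \<open>c > 0\<close> by (simp add: norm_inverse le_imp_inverse_le)
  ultimately have "(\<lambda>x. inverse (h x)) \<in> CB"
    unfolding CB_iff by blast
  then have "\<psi> (\<lambda>x. h x * inverse (h x)) = 0"
    using character_mult[OF \<psi> h] \<open>\<psi> h = 0\<close> by simp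
  moreover have "\<psi> (\<lambda>x. h x * inverse (h x)) = 1"
    using nonzero character_const[OF \<psi>, of 1] by simp
  ultimately show False
    by simp
qed

lemma character_CB_dist_square:
  assumes \<psi>: "\<psi> \<in> characters CB" and f: "f \<in> CB"
  shows "(\<lambda>x. complex_of_real (cmod (f x - \<psi> f)) ^ 2) \<in> CB"
    and "\<psi> (\<lambda>x. complex_of_real (cmod (f x - \<psi> f)) ^ 2) = 0"
proof -
  define g where "g x = f x - \<psi> f" for x
  have "(\<lambda>x. f x + - \<psi> f) \<in> CB"
    by (rule CB_add[OF f CB_const])
  then have g: "g \<in> CB"
    by (simp add: g_def[abs_def])
  have "\<psi> (\<lambda>x. f x + - \<psi> f) = \<psi> f + \<psi> (\<lambda>x. - \<psi> f)"
    by (rule character_add[OF \<psi> f CB_const])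
  then have "\<psi> g = 0"
    by (simp add: g_def[abs_def] character_const[OF \<psi>])
  have "(\<lambda>x. cnj (g x)) \<in> CB"
    using g unfolding CB_iff by (auto intro: continuous_on_cnj)
  moreover have square: "(\<lambda>x. complex_of_real (cmod (f x - \<psi> f)) ^ 2) = (\<lambda>x. g x * cnj (g x))"
    by (simp only: g_def of_real_power[symmetric] complex_norm_square)
  ultimately show "(\<lambda>x. complex_of_real (cmod (f x - \<psi> f)) ^ 2) \<in> CB"
    and "\<psi> (\<lambda>x. complex_of_real (cmod (f x - \<psi> f)) ^ 2) = 0"
    using g CB_mult character_mult[OF \<psi>] \<open>\<psi> g = 0\<close> by simp_all
qed

lemma characters_CB_subset_closure_evalCB:
  "characters (CB :: ('a::topological_space \<Rightarrow> complex) set) \<subseteq> closure (range evalCB)"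
proof
  fix \<psi> :: "('a \<Rightarrow> complex) \<Rightarrow> complex" assume \<psi>: "\<psi> \<in> characters CB"
  show "\<psi> \<in> closure (range evalCB)"
  proof (rule in_closure_funI, rule ccontr)
    fix F and e :: real
    assume "finite F" "e > 0" and far: "\<not> (\<exists>s\<in>range evalCB. \<forall>f\<in>F. dist (s f) (\<psi> f) < e)"
    define G where "G = F \<inter> CB"
    define h where "h x = (\<Sum>f\<in>G. complex_of_real (cmod (f x - \<psi> f)) ^ 2)" for x
    have "h \<in> CB \<and> \<psi> h = (\<Sum>f\<in>G. \<psi> (\<lambda>x. complex_of_real (cmod (f x - \<psi> f)) ^ 2))"
      unfolding h_def[abs_def] using \<open>finite F\<close>
      by (intro character_sum[OF \<psi> function_algebra_CB]) (auto simp: G_def character_CB_dist_square[OF \<psi>])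
    then have "h \<in> CB" and "\<psi> h = 0"
      by (simp_all add: G_def character_CB_dist_square[OF \<psi>])
    moreover have "e\<^sup>2 \<le> cmod (h x)" for x
    proof -
      obtain f where "f \<in> F" and f_far: "e \<le> dist (evalCB x f) (\<psi> f)"
        using far by (auto simp: not_less)
      moreover have "f \<in> CB"
      proof (rule ccontr)
        assume "f \<notin> CB"
        then have "dist (evalCB x f) (\<psi> f) = 0"
          by (simp add: evalCB_def character_outside[OF \<psi>])
        with f_far \<open>e > 0\<close> show False
          by simp
      qed
      ultimately have "f \<in> G" and "e \<le> cmod (f x - \<psi> f)"
        by (simp_all add: G_def evalCB_def dist_norm)
      then have "e\<^sup>2 \<le> (cmod (f x - \<psi> f))\<^sup>2"
        using \<open>e > 0\<close> by (intro power_mono) auto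
      also have "\<dots> \<le> (\<Sum>g\<in>G. (cmod (g x - \<psi> g))\<^sup>2)"
        using \<open>f \<in> G\<close> \<open>finite F\<close> by (intro member_le_sum) (auto simp: G_def)
      also have "\<dots> = cmod (h x)"
        by (simp add: h_def sum_nonneg flip: of_real_sum of_real_power)
      finally show ?thesis .
    qed
    then show False
      using character_CB_nonzero[OF \<psi> \<open>h \<in> CB\<close>, of "e\<^sup>2"] \<open>\<psi> h = 0\<close> \<open>e > 0\<close> by simp
  qed
qed


section \<open>Restriction from CB to Lmc\<close>

definition restrict_Lmc ::
  "(('a::{topological_space, semigroup_mult} \<Rightarrow> complex) \<Rightarrow> complex) \<Rightarrow> ('a \<Rightarrow> complex) \<Rightarrow> complex"
where
  "restrict_Lmc \<phi> = (\<lambda>h. if h \<in> Lmc then \<phi> h else 0)"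

lemma evl_eq_restrict_Lmc: "evl s = restrict_Lmc (evalCB s)"
  using Lmc_subset_CB by (auto simp: fun_eq_iff evl_def restrict_Lmc_def evalCB_def)

lemma continuous_on_restrict_Lmc: "continuous_on S restrict_Lmc"
  unfolding restrict_Lmc_def
proof (intro continuous_on_coordinatewise_then_product)
  show "continuous_on S (\<lambda>\<phi>. if h \<in> Lmc then \<phi> h else 0)" for h
    by (cases "h \<in> Lmc") (simp_all add: continuous_on_subset[OF continuous_on_product_coordinates])
qed

lemma closure_evl_subset_restrict_Lmc: "closure (evl ` T) \<subseteq> restrict_Lmc ` closure (evalCB ` T)"
proof (rule closure_minimal)
  have "evl ` T = restrict_Lmc ` evalCB ` T"
    by (auto simp: evl_eq_restrict_Lmc)
  then show "evl ` T \<subseteq> restrict_Lmc ` closure (evalCB ` T)"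
    by (simp add: image_mono closure_subset)
  show "closed (restrict_Lmc ` closure (evalCB ` T))"
    by (intro compact_imp_closed_fun compact_continuous_image continuous_on_restrict_Lmc compact_closure_evalCB)
qed

lemma Top_CB:
  assumes semi: "semitopological TYPE('a::{topological_space, semigroup_mult})"
    and \<kappa>: "\<kappa> \<in> closure (range evl)" and f: "f \<in> (Lmc :: ('a \<Rightarrow> complex) set)"
  shows "Top \<kappa> f \<in> CB"
proof -
  obtain \<kappa>' where \<kappa>': "\<kappa>' \<in> closure (range evalCB)" and "\<kappa> = restrict_Lmc \<kappa>'"
    using \<kappa> closure_evl_subset_restrict_Lmc by blast
  then have "Top \<kappa> f = Top \<kappa>' f"
    using Ltrans_Lmc[OF semi f] by (simp add: Top_def restrict_Lmc_def)
  moreover have "\<kappa>' \<in> characters CB"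
    using \<kappa>' closure_evalCB_subset_characters by blast
  ultimately show ?thesis
    using f by (simp add: Lmc_iff)
qed


section \<open>Multiplication in the Lmc-compactification\<close>

text \<open>The product \<epsilon>(s)\<nu> (see \<open>Lmc_mult_evl\<close>), in a form that is visibly continuous in \<nu>.\<close>

definition lmult ::
  "'a::{topological_space, semigroup_mult} \<Rightarrow> (('a \<Rightarrow> complex) \<Rightarrow> complex) \<Rightarrow> ('a \<Rightarrow> complex) \<Rightarrow> complex"
where
  "lmult s \<nu> = (\<lambda>h. if h \<in> Lmc then \<nu> (Ltrans s h) else 0)"

lemma continuous_on_lmult: "continuous_on S (lmult s)"
  unfolding lmult_def
proof (intro continuous_on_coordinatewise_then_product)
  show "continuous_on S (\<lambda>\<nu>. if h \<in> Lmc then \<nu> (Ltrans s h) else 0)" for h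
    by (cases "h \<in> Lmc") (simp_all add: continuous_on_subset[OF continuous_on_product_coordinates])
qed

lemma continuous_on_Lmc_mult_left: "continuous_on S (\<lambda>\<mu>. Lmc_mult \<mu> \<nu>)"
  unfolding Lmc_mult_def
proof (intro continuous_on_coordinatewise_then_product)
  show "continuous_on S (\<lambda>\<mu>. if h \<in> Lmc then \<mu> (Top \<nu> h) else 0)" for h
    by (cases "h \<in> Lmc") (simp_all add: continuous_on_subset[OF continuous_on_product_coordinates])
qed

lemma lmult_evl:
  "semitopological TYPE('a::{topological_space, semigroup_mult}) \<Longrightarrow>
    lmult s (evl t) = evl (s * t :: 'a)"
  by (auto simp: fun_eq_iff lmult_def evl_def Ltrans_Lmc) (simp add: Ltrans_def)

lemma lmult_closure_evl:
  assumes "semitopological TYPE('a::{topological_space, semigroup_mult})"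
    and "\<nu> \<in> closure (evl ` T)"
  shows "lmult (s::'a) \<nu> \<in> closure (evl ` (\<lambda>t. s * t) ` T)"
proof -
  have "lmult s ` evl ` T = evl ` (\<lambda>t. s * t) ` T"
    by (auto simp: image_image lmult_evl[OF assms(1)])
  then have "lmult s ` evl ` T \<subseteq> closure (evl ` (\<lambda>t. s * t) ` T)"
    by (simp add: closure_subset)
  then have "lmult s ` closure (evl ` T) \<subseteq> closure (evl ` (\<lambda>t. s * t) ` T)"
    by (intro image_closure_subset continuous_on_lmult closed_closure)
  with assms(2) show ?thesis
    by blast
qed

lemma Lmc_mult_evalCB:
  assumes "semitopological TYPE('a::{topological_space, semigroup_mult})"
    and "\<nu> \<in> closure (range evl)"
  shows "Lmc_mult (evalCB (s::'a)) \<nu> = lmult s \<nu>"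
  using Top_CB[OF assms] by (auto simp: fun_eq_iff Lmc_mult_def lmult_def evalCB_def Top_def)

lemma Lmc_mult_in_closure_evl:
  assumes "semitopological TYPE('a::{topological_space, semigroup_mult})"
    and "\<mu> \<in> characters CB" and \<nu>: "\<nu> \<in> closure (range (evl :: 'a \<Rightarrow> _))"
  shows "Lmc_mult \<mu> \<nu> \<in> closure (range (evl :: 'a \<Rightarrow> _))"
proof -
  have "lmult s \<nu> \<in> closure (range evl)" for s :: 'a
    using lmult_closure_evl[OF assms(1) \<nu>] closure_mono[of "evl ` range ((*) s)" "range evl"] by blast
  then have "(\<lambda>\<mu>. Lmc_mult \<mu> \<nu>) ` closure (range evalCB) \<subseteq> closure (range evl)"
    by (intro image_closure_subset continuous_on_Lmc_mult_left)
      (auto simp: Lmc_mult_evalCB[OF assms(1) \<nu>])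
  with assms(2) show ?thesis
    using characters_CB_subset_closure_evalCB by blast
qed

lemma Top_Lmc_mult:
  assumes "semitopological TYPE('a::{topological_space, semigroup_mult})" and "f \<in> Lmc"
  shows "Top \<mu> (Top \<nu> f) = Top (Lmc_mult \<mu> \<nu>) (f :: 'a \<Rightarrow> complex)"
proof
  fix s
  have "Top (Lmc_mult \<mu> \<nu>) f s = Lmc_mult \<mu> \<nu> (Ltrans s f)"
    by (simp only: Top_def)
  also have "\<dots> = \<mu> (Top \<nu> (Ltrans s f))"
    using Ltrans_Lmc[OF assms] by (simp add: Lmc_mult_def)
  also have "\<dots> = Top \<mu> (Top \<nu> f) s"
    by (simp add: Top_def[of \<mu>] Top_Ltrans)
  finally show "Top \<mu> (Top \<nu> f) s = Top (Lmc_mult \<mu> \<nu>) f s" ..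
qed

lemma Top_Lmc:
  assumes "semitopological TYPE('a::{topological_space, semigroup_mult})"
    and "\<nu> \<in> closure (range evl)" and "f \<in> (Lmc :: ('a \<Rightarrow> complex) set)"
  shows "Top \<nu> f \<in> Lmc"
  using Top_CB[OF assms] Top_CB[OF assms(1) Lmc_mult_in_closure_evl[OF assms(1) _ assms(2)] assms(3)]
  by (simp add: Lmc_iff Top_Lmc_mult[OF assms(1,3)])

lemma Lmc_mult_evl:
  assumes "semitopological TYPE('a::{topological_space, semigroup_mult})"
    and "\<nu> \<in> closure (range evl)"
  shows "Lmc_mult (evl (s::'a)) \<nu> = lmult s \<nu>"
  using Top_Lmc[OF assms] by (auto simp: fun_eq_iff Lmc_mult_def lmult_def evl_def Top_def)

theorem lemma4p4:
  fixes x y :: "nat \<Rightarrow> 'a::{t2_space, semigroup_mult}"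
    and \<mu> \<nu> :: "('a \<Rightarrow> complex) \<Rightarrow> complex"
  assumes "semitopological TYPE('a)"
    and "unbounded_seq x" and "unbounded_seq y"
    and "\<mu> \<in> Sstar" and "\<nu> \<in> Sstar"
    and "\<nu> \<in> clLmc (range x)"
    and "\<mu> \<in> clLmc (range y)"
  shows "Lmc_mult \<mu> \<nu> \<in> clLmc {y k * x n | k n. k < n}"
proof -
  note semi = assms(1)
  define A where "A = {y k * x n | k n. k < n}"
  have \<nu>: "\<nu> \<in> closure (range (evl \<circ> x))" "\<nu> \<notin> range (evl \<circ> x)"
    using assms(5,6) by (auto simp: clLmc_def Sstar_def image_comp)
  then have \<nu>_evl: "\<nu> \<in> closure (range evl)"
    using closure_mono[of "range (evl \<circ> x)" "range evl"] by auto
  have "Lmc_mult (evl (y k)) \<nu> \<in> closure (evl ` A)" for k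
  proof -
    have "\<nu> \<in> closure (evl ` x ` {k<..})"
      using closure_range_tail[OF \<nu>] by (simp add: image_comp)
    then have "lmult (y k) \<nu> \<in> closure (evl ` (\<lambda>t. y k * t) ` x ` {k<..})"
      by (rule lmult_closure_evl[OF semi])
    also have "\<dots> \<subseteq> closure (evl ` A)"
      by (intro closure_mono image_mono) (auto simp: A_def)
    finally show ?thesis
      by (simp add: Lmc_mult_evl[OF semi \<nu>_evl])
  qed
  then have "(\<lambda>\<mu>. Lmc_mult \<mu> \<nu>) ` closure (evl ` range y) \<subseteq> closure (evl ` A)"
    by (intro image_closure_subset continuous_on_Lmc_mult_left) auto
  moreover have "closure (evl ` A) \<subseteq> SLmc"
    unfolding SLmc_eq_characters[OF semi] evl_def[abs_def]
    by (rule closure_evaluations_subset_characters[OF function_algebra_Lmc[OF semi]])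
  ultimately show ?thesis
    using assms(7) by (auto simp: clLmc_def A_def)
qed

end
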